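(* Let $f,g:\mathbb{R}^n\to[0,+\infty)$ and $h_1,h_2:\mathbb{R}^n\to\mathbb{R}$, let $C\subseteq\mathbb{R}^n$ be closed and convex, $\Omega:=\{x:g(x)\neq0\}$, $C\cap\Omega\neq\emptyset$, and assume: $f$ is convex; $g$ is differentiable with locally Lipschitz gradient; $h_1$ is differentiable with locally Lipschitz gradient; $h_2$ is convex. Let $F$, $H$ and Algorithm 1 be as in the context, with $x^0\in\mathrm{dom}F$, and assume $\mathcal{X}_0:=\{x\in\mathrm{dom}F:F(x)\le F(x^0)\}$ is compact. Then every accumulation point of the sequence $\{x^k:k\in\mathbb{N}\}$ generated by Algorithm 1 belongs to $\mathcal{X}_0$ and is a critical point of $F$.
   Context: $F(x)=f^2(x)/g(x)+h_1(x)-h_2(x)$ if $x\in\Omega\cap C$, $F(x)=+\infty$ otherwise. $\iota_C$ is the indicator of $C$, $h_2^\star$ the convex conjugate of $h_2$, $\partial$ the limiting subdifferential (the usual one for convex functions), $\mathrm{prox}_\varphi(y)=\arg\min_x\{\varphi(x)+\frac12\|x-y\|_2^2\}$. $H(x,z,c)=2cf(x)+\iota_C(x)-c^2g(x)+h_1(x)+h_2^\star(z)-\langle x,z\rangle$. A point $x^\star\in\Omega\cap C$ is a critical point of $F$ if, with $c_\star=f(x^\star)/g(x^\star)$, $0\in\partial(2c_\star f+\iota_C)(x^\star)-c_\star^2\nabla g(x^\star)+\nabla h_1(x^\star)-\partial h_2(x^\star)$. Algorithm 1: given $x^0\in\mathrm{dom}F$, $0<\underline{\alpha}<\overline{\alpha}$,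 $\sigma>0$, $0<r<1$, for $k=0,1,2,\dots$: (Step 1) compute $c_k=f(x^k)/g(x^k)$, choose $z^k\in\partial h_2(x^k)$, set $\alpha:=\widetilde{\alpha}_k\in[\underline{\alpha},\overline{\alpha}]$; (Step 2) compute $\widehat{x}^k\in\mathrm{prox}_{2\alpha c_kf+\iota_C}\big(x^k-\alpha(\nabla h_1(x^k)-c_k^2\nabla g(x^k)-z^k)\big)$; if $\widehat{x}^k\in\Omega$ and $H(\widehat{x}^k,z^k,f(\widehat{x}^k)/g(\widehat{x}^k))+\frac{\sigma}{2}\|\widehat{x}^k-x^k\|_2^2\le F(x^k)$, set $x^{k+1}=\widehat{x}^k$, $\alpha_k:=\alpha$ and go to the next $k$; otherwise set $\alpha:=r\alpha$ and repeat Step 2. *)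

theory Defs
  imports "HOL-Analysis.Analysis"
begin

definition ind :: "'a set \<Rightarrow> 'a \<Rightarrow> ereal" where
  "ind C x = (if x \<in> C then 0 else \<infinity>)"

text \<open>Convex subdifferential of an extended-real-valued function (the limiting
  subdifferential coincides with it for proper convex functions).\<close>
definition subdiff :: "('a::real_inner \<Rightarrow> ereal) \<Rightarrow> 'a \<Rightarrow> 'a set" where
  "subdiff \<phi> x = {v. \<bar>\<phi> x\<bar> \<noteq> \<infinity> \<and> (\<forall>y. \<phi> x + ereal (inner v (y - x)) \<le> \<phi> y)}"

definition conj :: "('a::real_inner \<Rightarrow> real) \<Rightarrow> 'a \<Rightarrow> ereal" where
  "conj h z = (SUP y. ereal (inner y z - h y))"

definition prox :: "('a::real_normed_vector \<Rightarrow> ereal) \<Rightarrow> 'a \<Rightarrow> 'a set" where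
  "prox \<phi> y = {x. \<forall>x'. \<phi> x + ereal (norm (x - y)^2 / 2) \<le> \<phi> x' + ereal (norm (x' - y)^2 / 2)}"

definition Omega :: "('a \<Rightarrow> real) \<Rightarrow> 'a set" where
  "Omega g = {x. g x \<noteq> 0}"

definition Fobj :: "('a \<Rightarrow> real) \<Rightarrow> ('a \<Rightarrow> real) \<Rightarrow> ('a \<Rightarrow> real) \<Rightarrow> ('a \<Rightarrow> real)
    \<Rightarrow> 'a set \<Rightarrow> 'a \<Rightarrow> ereal" where
  "Fobj f g h1 h2 C x =
     (if x \<in> Omega g \<inter> C then ereal ((f x)^2 / g x + h1 x - h2 x) else \<infinity>)"

definition domF :: "('a \<Rightarrow> real) \<Rightarrow> ('a \<Rightarrow> real) \<Rightarrow> ('a \<Rightarrow> real) \<Rightarrow> ('a \<Rightarrow> real)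
    \<Rightarrow> 'a set \<Rightarrow> 'a set" where
  "domF f g h1 h2 C = {x. Fobj f g h1 h2 C x < \<infinity>}"

definition Hfun :: "('a::real_inner \<Rightarrow> real) \<Rightarrow> ('a \<Rightarrow> real) \<Rightarrow> ('a \<Rightarrow> real) \<Rightarrow> ('a \<Rightarrow> real)
    \<Rightarrow> 'a set \<Rightarrow> 'a \<Rightarrow> 'a \<Rightarrow> real \<Rightarrow> ereal" where
  "Hfun f g h1 h2 C x z c =
     ereal (2 * c * f x) + ind C x + ereal (h1 x - c^2 * g x) + conj h2 z
       + ereal (- inner x z)"

definition critical_point :: "('a::real_inner \<Rightarrow> real) \<Rightarrow> ('a \<Rightarrow> real) \<Rightarrow> ('a \<Rightarrow> 'a)
    \<Rightarrow> ('a \<Rightarrow> 'a) \<Rightarrow> ('a \<Rightarrow> real) \<Rightarrow> 'a set \<Rightarrow> 'a \<Rightarrow> bool" where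
  "critical_point f g Dg Dh1 h2 C xs \<longleftrightarrow>
     xs \<in> Omega g \<inter> C \<and>
     (let c = f xs / g xs in
       \<exists>u \<in> subdiff (\<lambda>y. ereal (2 * c * f y) + ind C y) xs.
       \<exists>w \<in> subdiff (\<lambda>y. ereal (h2 y)) xs.
         u - c^2 *\<^sub>R Dg xs + Dh1 xs - w = 0)"

definition locally_lipschitz :: "('a::metric_space \<Rightarrow> 'b::metric_space) \<Rightarrow> bool" where
  "locally_lipschitz G \<longleftrightarrow>
     (\<forall>x. \<exists>e>0. \<exists>L. \<forall>y\<in>ball x e. \<forall>y'\<in>ball x e. dist (G y) (G y') \<le> L * dist y y')"

text \<open>For each k: c k, z k, the initial step a0 k \<in> [alo,ahi],
  the number j k of backtracking reductions, trial points xh k i for i \<le> j k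
  (each a chosen element of the prox), all rejected trials for i < j k and the
  accepted trial at i = j k, with x (k+1) = xh k (j k).\<close>
definition generated_by_alg1 ::
  "('a::euclidean_space \<Rightarrow> real) \<Rightarrow> ('a \<Rightarrow> real) \<Rightarrow> ('a \<Rightarrow> 'a) \<Rightarrow> ('a \<Rightarrow> real) \<Rightarrow> ('a \<Rightarrow> 'a)
    \<Rightarrow> ('a \<Rightarrow> real) \<Rightarrow> 'a set \<Rightarrow> real \<Rightarrow> real \<Rightarrow> real \<Rightarrow> real \<Rightarrow> (nat \<Rightarrow> 'a) \<Rightarrow> bool" where
  "generated_by_alg1 f g Dg h1 Dh1 h2 C alo ahi sig r x \<longleftrightarrow>
     x 0 \<in> domF f g h1 h2 C \<and>
     (\<exists>(z :: nat \<Rightarrow> 'a) (a0 :: nat \<Rightarrow> real) (j :: nat \<Rightarrow> nat) (xh :: nat \<Rightarrow> nat \<Rightarrow> 'a).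
       \<forall>k. let c = f (x k) / g (x k) in
         z k \<in> subdiff (\<lambda>y. ereal (h2 y)) (x k) \<and>
         alo \<le> a0 k \<and> a0 k \<le> ahi \<and>
         (\<forall>i \<le> j k. let a = r ^ i * a0 k in
            xh k i \<in> prox (\<lambda>y. ereal (2 * a * c * f y) + ind C y)
                       (x k - a *\<^sub>R (Dh1 (x k) - c^2 *\<^sub>R Dg (x k) - z k))) \<and>
         (\<forall>i \<le> j k.
            (xh k i \<in> Omega g \<and>
             Hfun f g h1 h2 C (xh k i) (z k) (f (xh k i) / g (xh k i))
               + ereal (sig / 2 * norm (xh k i - x k)^2) \<le> Fobj f g h1 h2 C (x k))
            \<longleftrightarrow> i = j k) \<and>
         x (Suc k) = xh k (j k))"

end

theory Submission
  imports Defs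
begin

text \<open>
  Acceptance of a trial point \<open>p\<close> means \<open>H(p, z\<^sup>k, f(p)/g(p)) + \<sigma>/2 |p - x\<^sup>k|\<^sup>2 \<le> F(x\<^sup>k)\<close>, and
  \<open>F \<le> H\<close> by the Fenchel-Young inequality; so \<open>F\<close> decreases sufficiently along the iterates, which
  therefore stay in the compact sublevel set \<open>X\<^sub>0\<close>. On a uniform neighbourhood of \<open>X\<^sub>0\<close> the data
  are bounded and Lipschitz and \<open>g\<close> is bounded away from \<open>0\<close>. The proximal step is a descent step for
  \<open>2 c f - c\<^sup>2 g + h\<^sub>1 - \<langle>\<cdot>, z\<rangle>\<close> with \<open>c = f(x)/g(x)\<close>, and replacing \<open>c\<close> by \<open>f(p)/g(p)\<close> costs only
  \<open>g(p) (f(p)/g(p) - c)\<^sup>2\<close>, which is quadratic in \<open>|p - x|\<close>; hence every trial step below a fixed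
  threshold is accepted and the accepted steps are bounded below. The squared increments are summable
  and the subgradients \<open>z\<^sup>k\<close> are bounded, so along a subsequence the optimality inequality of the
  proximal step passes to the limit: at an accumulation point it is a subgradient inequality for
  \<open>2 c f + \<iota>\<^sub>C\<close> up to a quadratic error term, which convexity removes.
\<close>

lemma quadratic_ineq_imp_less_half:
  fixes d A b e :: real
  assumes "0 \<le> d" "d^2 \<le> A + b * d" "A \<le> e^2 / 16" "b \<le> e / 8" "0 < e"
  shows "d < e / 2"
proof (rule ccontr)
  assume "\<not> d < e / 2"
  then have "e / 2 * (3 * e / 8) \<le> d * (d - e / 8)" using assms by (intro mult_mono) auto
  then have "3 * (e * e) / 16 + d * e / 8 \<le> d * d" by (simp add: algebra_simps)
  moreover have "b * d \<le> e / 8 * d" using assms by (intro mult_right_mono) auto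
  moreover have "0 < e * e" using \<open>0 < e\<close> by simp
  moreover have "d * d \<le> A + b * d" "A \<le> e * e / 16" using assms(2,3) by (simp_all add: power2_eq_square)
  ultimately show False by (simp add: mult.commute)
qed

section \<open>Convex and smooth functions\<close>

lemma convex_on_lipschitz_on_half_ball:
  fixes f :: "'a::real_normed_vector \<Rightarrow> real"
  assumes f: "convex_on UNIV f" and R: "R > 0" and bound: "\<And>y. y \<in> ball x R \<Longrightarrow> \<bar>f y\<bar> \<le> M"
  shows "(8 * M / R)-lipschitz_on (ball x (R / 2)) f"
proof -
  have M: "M \<ge> 0" using bound[of x] R by simp
  have one_sided: "f y' - f y \<le> 8 * M / R * dist y y'"
    if y: "y \<in> ball x (R / 2)" and y': "y' \<in> ball x (R / 2)" and "y \<noteq> y'" for y y'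
  proof -
    define \<delta> where "\<delta> = dist y y'"
    have \<delta>: "\<delta> > 0" using \<open>y \<noteq> y'\<close> by (simp add: \<delta>_def)
    \<comment> \<open>y' is a convex combination of y and the point u beyond y' at distance R/4 from it\<close>
    define u where "u = y' + (R / 4 / \<delta>) *\<^sub>R (y' - y)"
    define l where "l = \<delta> / (\<delta> + R / 4)"
    have l: "0 \<le> l" "l \<le> 1" using \<delta> R by (auto simp: l_def)
    have "l \<le> \<delta> / (R / 4)" unfolding l_def using \<delta> R by (intro divide_left_mono) auto
    then have l4: "l \<le> 4 * \<delta> / R" by (simp add: mult.commute)
    have "dist x u \<le> dist x y' + dist y' u" by (rule dist_triangle)
    also have "dist y' u = R / 4" using \<delta> R by (simp add: u_def dist_norm \<delta>_def norm_minus_commute)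
    finally have "u \<in> ball x R" using y' R by simp
    have "(1 - l) *\<^sub>R y + l *\<^sub>R u = y + (l * (1 + R / 4 / \<delta>)) *\<^sub>R (y' - y)"
      by (simp add: u_def algebra_simps)
    also have "l * (1 + R / 4 / \<delta>) = 1"
    proof -
      have "1 + R / 4 / \<delta> = (\<delta> + R / 4) / \<delta>" using \<delta> by (simp add: field_simps)
      moreover have "\<delta> + R / 4 > 0" using \<delta> R by simp
      ultimately show ?thesis using \<delta> by (simp add: l_def)
    qed
    finally have "f y' \<le> (1 - l) * f y + l * f u"
      using convex_onD[OF f l(1,2), of y u] by simp
    then have "f y' - f y \<le> l * (f u - f y)" by (simp add: algebra_simps)
    also have "\<dots> \<le> l * (2 * M)"
      using bound[OF \<open>u \<in> ball x R\<close>] bound[of y] y R l by (intro mult_left_mono) auto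
    also have "\<dots> \<le> (4 * \<delta> / R) * (2 * M)" using l4 M by (intro mult_right_mono) auto
    also have "\<dots> = 8 * M / R * dist y y'" by (simp add: \<delta>_def)
    finally show ?thesis .
  qed
  show ?thesis
  proof (rule lipschitz_onI)
    fix y y' assume "y \<in> ball x (R / 2)" "y' \<in> ball x (R / 2)"
    then show "dist (f y) (f y') \<le> 8 * M / R * dist y y'"
      using one_sided[of y y'] one_sided[of y' y] by (cases "y = y'") (auto simp: dist_real_def dist_commute)
  qed (use M R in simp)
qed

lemma convex_on_locally_lipschitz:
  fixes f :: "'a::euclidean_space \<Rightarrow> real"
  assumes "convex_on UNIV f"
  shows "\<exists>e>0. \<exists>L. L-lipschitz_on (ball x e) f"
proof -
  have "isCont f x"
    using convex_on_continuous[OF open_UNIV assms] by (simp add: continuous_on_eq_continuous_at)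
  then obtain R where R: "R > 0" "\<And>y. dist y x < R \<Longrightarrow> dist (f y) (f x) < 1"
    unfolding continuous_at_eps_delta by (metis zero_less_one)
  have "\<bar>f y\<bar> \<le> \<bar>f x\<bar> + 1" if "y \<in> ball x R" for y
    using R(2)[of y] that by (auto simp: dist_real_def dist_commute)
  then show ?thesis
    using convex_on_lipschitz_on_half_ball[OF assms R(1)] R(1) by (metis half_gt_zero)
qed

lemma locally_lipschitz_on_ball:
  assumes "locally_lipschitz G"
  shows "\<exists>e>0. \<exists>L. L-lipschitz_on (ball x e) G"
proof -
  obtain e L where "e > 0" and L: "\<forall>y\<in>ball x e. \<forall>y'\<in>ball x e. dist (G y) (G y') \<le> L * dist y y'"
    using assms unfolding locally_lipschitz_def by blast
  have "\<bar>L\<bar>-lipschitz_on (ball x e) G"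
  proof (rule lipschitz_onI)
    fix y y' assume "y \<in> ball x e" "y' \<in> ball x e"
    then have "dist (G y) (G y') \<le> L * dist y y'" using L by blast
    also have "\<dots> \<le> \<bar>L\<bar> * dist y y'" by (simp add: mult_right_mono)
    finally show "dist (G y) (G y') \<le> \<bar>L\<bar> * dist y y'" .
  qed simp
  with \<open>e > 0\<close> show ?thesis by blast
qed

lemma locally_lipschitz_isCont:
  assumes "locally_lipschitz G"
  shows "isCont G x"
proof -
  obtain e L where "e > 0" "L-lipschitz_on (ball x e) G"
    using locally_lipschitz_on_ball[OF assms] by blast
  then have "continuous_on (ball x e) G" by (intro lipschitz_on_continuous_on)
  with \<open>e > 0\<close> show ?thesis by (simp add: continuous_on_eq_continuous_at)
qed

lemma isCont_eventually_dist_less: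
  fixes \<phi> :: "'a::metric_space \<Rightarrow> 'b::metric_space"
  assumes "isCont \<phi> x" and "0 < \<epsilon>"
  shows "\<forall>\<^sub>F y in nhds x. dist (\<phi> y) (\<phi> x) < \<epsilon>"
  using assms unfolding continuous_at_eps_delta eventually_nhds_metric by blast

lemma gradient_bounded_imp_lipschitz_on:
  fixes \<phi> :: "'a::real_inner \<Rightarrow> real"
  assumes der: "\<And>y. (\<phi> has_derivative (\<lambda>v. inner (D y) v)) (at y)"
    and "convex S" and bound: "\<And>y. y \<in> S \<Longrightarrow> norm (D y) \<le> B" and "0 \<le> B"
  shows "B-lipschitz_on S \<phi>"
proof (rule bounded_derivative_imp_lipschitz[where f' = "\<lambda>y v. inner (D y) v"])
  fix y assume "y \<in> S"
  show "(\<phi> has_derivative (\<lambda>v. inner (D y) v)) (at y within S)"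
    by (rule has_derivative_at_withinI[OF der])
  show "onorm (\<lambda>v. inner (D y) v) \<le> B"
  proof (rule onorm_bound[OF \<open>0 \<le> B\<close>])
    fix v
    show "norm (inner (D y) v) \<le> B * norm v"
      using Cauchy_Schwarz_ineq2[of "D y" v] bound[OF \<open>y \<in> S\<close>]
      by (simp add: mult_right_mono order_trans)
  qed
qed (use assms in auto)

lemma lipschitz_gradient_linearization:
  fixes \<phi> :: "'a::euclidean_space \<Rightarrow> real"
  assumes der: "\<And>y. (\<phi> has_derivative (\<lambda>v. inner (D y) v)) (at y)"
    and "convex S" and lip: "L-lipschitz_on S D" and "x \<in> S" "p \<in> S"
  shows "\<bar>\<phi> p - \<phi> x - inner (D x) (p - x)\<bar> \<le> L * norm (p - x)^2"
proof -
  have seg: "closed_segment x p \<subseteq> S" using assms by (simp add: closed_segment_subset)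
  have "onorm (\<lambda>v. inner (D y) v - inner (D x) v) \<le> L * norm (p - x)" if "y \<in> closed_segment x p" for y
  proof (rule onorm_le)
    fix v
    have "norm (inner (D y) v - inner (D x) v) = \<bar>inner (D y - D x) v\<bar>" by (simp add: inner_diff_left)
    also have "\<dots> \<le> norm (D y - D x) * norm v" by (rule Cauchy_Schwarz_ineq2)
    also have "norm (D y - D x) \<le> L * norm (p - x)"
    proof -
      have "norm (D y - D x) \<le> L * dist y x"
        using lipschitz_on_normD[OF lip] seg that \<open>x \<in> S\<close> by (auto simp: dist_norm)
      also have "\<dots> \<le> L * norm (p - x)"
        using dist_in_closed_segment[OF that] lipschitz_on_nonneg[OF lip]
        by (intro mult_left_mono) (auto simp: dist_norm norm_minus_commute)
      finally show ?thesis .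
    qed
    finally show "norm (inner (D y) v - inner (D x) v) \<le> L * norm (p - x) * norm v"
      by (simp add: mult_right_mono)
  qed
  moreover have "x + t *\<^sub>R (p - x) \<in> closed_segment x p" if "t \<in> {0..1}" for t
    using that unfolding closed_segment_def by (auto intro!: exI[of _ t] simp: algebra_simps)
  ultimately have "norm (\<phi> p - \<phi> x - inner (D x) (p - x)) \<le> norm (p - x) * (L * norm (p - x))"
    by (intro differentiable_bound_linearization[where S = "closed_segment x p" and f' = "\<lambda>y v. inner (D y) v"])
      (auto intro: has_derivative_at_withinI[OF der] simp: fun_diff_def)
  then show ?thesis by (simp add: power2_eq_square mult.assoc mult.left_commute)
qed

lemma compact_uniformly_local:
  fixes K :: "'a::metric_space set" and P :: "real \<Rightarrow> 'a set \<Rightarrow> bool"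
  assumes "compact K"
    and local: "\<And>x. x \<in> K \<Longrightarrow> \<exists>e>0. \<exists>B. P B (ball x e)"
    and mono: "\<And>B B' S S'. P B S \<Longrightarrow> B \<le> B' \<Longrightarrow> S' \<subseteq> S \<Longrightarrow> P B' S'"
  shows "\<exists>e>0. \<exists>B. \<forall>x\<in>K. P B (ball x e)"
proof -
  obtain E Bc where EB: "\<And>x. x \<in> K \<Longrightarrow> E x > 0 \<and> P (Bc x) (ball x (E x))"
    using local by metis
  obtain K' where K': "K' \<subseteq> K" "finite K'" "K \<subseteq> (\<Union>c\<in>K'. ball c (E c / 2))"
    by (rule compactE_image[OF \<open>compact K\<close>, of K "\<lambda>c. ball c (E c / 2)"]) (use EB in auto)
  show ?thesis
  proof (cases "K' = {}")
    case True
    with K' show ?thesis by (auto intro: exI[of _ 1])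
  next
    case False
    define e where "e = Min ((\<lambda>c. E c / 2) ` K')"
    define B where "B = Max (Bc ` K')"
    have "e > 0" using False K' EB by (auto simp: e_def)
    moreover have "P B (ball x e)" if "x \<in> K" for x
    proof -
      obtain c where c: "c \<in> K'" "x \<in> ball c (E c / 2)" using K' \<open>x \<in> K\<close> by auto
      have "e \<le> E c / 2" unfolding e_def using c K' by (intro Min_le) auto
      have "ball x e \<subseteq> ball c (E c)"
      proof
        fix y assume "y \<in> ball x e"
        then show "y \<in> ball c (E c)"
          using c(2) \<open>e \<le> E c / 2\<close> dist_triangle[of c y x] by simp
      qed
      moreover have "Bc c \<le> B" using c K' by (auto simp: B_def)
      ultimately show ?thesis using mono EB c K' by blast
    qed
    ultimately show ?thesis by blast
  qed
qed

section \<open>Subgradients and proximal points\<close>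

lemma subdiff_real_iff: "z \<in> subdiff (\<lambda>y. ereal (h y)) x \<longleftrightarrow> (\<forall>y. h x + inner z (y - x) \<le> h y)"
  by (simp add: subdiff_def)

lemma subgradient_norm_le:
  fixes h :: "'a::real_inner \<Rightarrow> real"
  assumes sub: "\<And>y. h x + inner z (y - x) \<le> h y" and "e > 0"
    and bound: "\<And>y. y \<in> ball x e \<Longrightarrow> \<bar>h y\<bar> \<le> B"
  shows "norm z \<le> 4 * B / e"
proof (cases "z = 0")
  case True
  then show ?thesis using bound[of x] \<open>e > 0\<close> by simp
next
  case False
  define y where "y = x + (e / 2 / norm z) *\<^sub>R z"
  have "y \<in> ball x e" using False \<open>e > 0\<close> by (simp add: y_def dist_norm)
  have "inner z (y - x) = e / 2 * norm z"
    using False by (simp add: y_def power2_norm_eq_inner[symmetric] power2_eq_square)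
  then have "e / 2 * norm z \<le> h y - h x" using sub[of y] by simp
  also have "\<dots> \<le> 2 * B" using bound[OF \<open>y \<in> ball x e\<close>] bound[of x] \<open>e > 0\<close> by simp
  finally show ?thesis using \<open>e > 0\<close> by (simp add: field_simps)
qed

lemma conj_eq_at_subgradient:
  assumes "z \<in> subdiff (\<lambda>y. ereal (h y)) x"
  shows "conj h z = ereal (inner x z - h x)"
  unfolding conj_def
proof (rule antisym)
  have "inner y z - h y \<le> inner x z - h x" for y
    using assms[unfolded subdiff_real_iff, rule_format, of y] by (simp add: inner_diff_right inner_commute)
  then show "(SUP y. ereal (inner y z - h y)) \<le> ereal (inner x z - h x)"
    by (simp add: SUP_least)
qed (rule SUP_upper, simp)

lemma subgradient_limit:
  fixes h :: "'a::real_inner \<Rightarrow> real"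
  assumes "continuous_on UNIV h" and "X \<longlonglongrightarrow> x" and "Z \<longlonglongrightarrow> z"
    and "\<And>n. Z n \<in> subdiff (\<lambda>y. ereal (h y)) (X n)"
  shows "z \<in> subdiff (\<lambda>y. ereal (h y)) x"
  unfolding subdiff_real_iff
proof
  fix y
  have "(\<lambda>n. h (X n)) \<longlonglongrightarrow> h x"
    using assms(1,2) by (intro isCont_tendsto_compose[of x h]) (auto simp: continuous_on_eq_continuous_at)
  then have "(\<lambda>n. h (X n) + inner (Z n) (y - X n)) \<longlonglongrightarrow> h x + inner z (y - x)"
    by (intro tendsto_add tendsto_inner assms(3) tendsto_diff tendsto_const assms(2))
  then show "h x + inner z (y - x) \<le> h y"
    using assms(4) by (intro LIMSEQ_le_const2) (auto simp: subdiff_real_iff)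
qed

lemma subdiff_plus_indI:
  assumes "x \<in> C" and "\<And>y. y \<in> C \<Longrightarrow> \<phi> x + inner u (y - x) \<le> \<phi> y"
  shows "u \<in> subdiff (\<lambda>y. ereal (\<phi> y) + ind C y) x"
  using assms unfolding subdiff_def ind_def by auto

lemma subgradient_of_quadratic_growth:
  fixes \<phi> :: "'a::real_inner \<Rightarrow> real"
  assumes "convex C" and "convex_on C \<phi>" and "x \<in> C"
    and growth: "\<And>y. y \<in> C \<Longrightarrow> \<phi> x + inner u (y - x) \<le> \<phi> y + Q * norm (y - x)^2"
    and "y \<in> C"
  shows "\<phi> x + inner u (y - x) \<le> \<phi> y"
proof -
  define D where "D = \<phi> x + inner u (y - x) - \<phi> y"
  \<comment> \<open>at \<open>(1 - t) x + t y\<close> the error term is quadratic in \<open>t\<close>, the gain from convexity linear\<close>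
  have "D \<le> t * (Q * norm (y - x)^2)" if t: "0 < t" "t \<le> 1" for t
  proof -
    define w where "w = (1 - t) *\<^sub>R x + t *\<^sub>R y"
    have "w \<in> C" using assms t unfolding w_def by (intro convexD) auto
    have "\<phi> w \<le> (1 - t) * \<phi> x + t * \<phi> y"
      unfolding w_def using t assms by (intro convex_onD) auto
    moreover have "w - x = t *\<^sub>R (y - x)" by (simp add: w_def algebra_simps)
    ultimately have "\<phi> x + t * inner u (y - x) \<le> (1 - t) * \<phi> x + t * \<phi> y + Q * (t^2 * norm (y - x)^2)"
      using growth[OF \<open>w \<in> C\<close>] by (simp add: power_mult_distrib)
    then have "t * D \<le> t * (t * (Q * norm (y - x)^2))"
      by (simp add: D_def power2_eq_square algebra_simps)
    then show ?thesis using t by simp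
  qed
  then have "eventually (\<lambda>t. D \<le> t * (Q * norm (y - x)^2)) (at_right 0)"
    unfolding eventually_at_right_field by (intro exI[of _ 1]) auto
  moreover have "((\<lambda>t. t * (Q * norm (y - x)^2)) \<longlongrightarrow> 0) (at_right 0)"
    by (auto intro!: tendsto_eq_intros)
  ultimately have "D \<le> 0"
    by (intro tendsto_lowerbound[OF _ _ trivial_limit_at_right_real])
  then show ?thesis by (simp add: D_def)
qed

lemma prox_indicator_optimality:
  assumes "p \<in> prox (\<lambda>y. ereal (\<psi> y) + ind C y) q" and "C \<noteq> {}"
  shows "p \<in> C" and "\<And>y. y \<in> C \<Longrightarrow> \<psi> p + norm (p - q)^2 / 2 \<le> \<psi> y + norm (y - q)^2 / 2"
proof -
  have opt: "ereal (\<psi> p) + ind C p + ereal (norm (p - q)^2 / 2) \<le> ereal (\<psi> y) + ind C y + ereal (norm (y - q)^2 / 2)" for y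
    using assms(1) unfolding prox_def by blast
  obtain y0 where "y0 \<in> C" using \<open>C \<noteq> {}\<close> by blast
  show "p \<in> C"
    using opt[of y0] \<open>y0 \<in> C\<close> by (cases "p \<in> C") (simp_all add: ind_def)
  then show "\<psi> p + norm (p - q)^2 / 2 \<le> \<psi> y + norm (y - q)^2 / 2" if "y \<in> C" for y
    using opt[of y] that by (simp add: ind_def)
qed

lemma prox_linearized_optimality:
  fixes x v :: "'a::real_inner"
  assumes "\<psi> p + norm (p - (x - a *\<^sub>R v))^2 / 2 \<le> \<psi> y + norm (y - (x - a *\<^sub>R v))^2 / 2"
  shows "\<psi> p + a * inner (p - y) v + norm (p - x)^2 / 2 \<le> \<psi> y + norm (y - x)^2 / 2"
proof -
  have expand: "norm (w - (x - a *\<^sub>R v))^2 = norm (w - x)^2 + 2 * a * inner (w - x) v + a^2 * norm v ^2" for w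
    unfolding power2_norm_eq_inner
    by (simp add: inner_commute power2_eq_square algebra_simps)
  show ?thesis using assms expand[of p] expand[of y] by (simp add: algebra_simps)
qed

section \<open>The fractional program\<close>

locale fractional_problem =
  fixes f g h1 h2 :: "'a::euclidean_space \<Rightarrow> real" and Dg Dh1 :: "'a \<Rightarrow> 'a" and C :: "'a set"
  assumes f_nonneg: "\<And>y. f y \<ge> 0" and g_nonneg: "\<And>y. g y \<ge> 0"
    and C_convex: "convex C" and f_convex: "convex_on UNIV f"
    and g_grad: "\<And>y. (g has_derivative (\<lambda>v. inner (Dg y) v)) (at y)"
    and g_lip: "locally_lipschitz Dg"
    and h1_grad: "\<And>y. (h1 has_derivative (\<lambda>v. inner (Dh1 y) v)) (at y)"
    and h1_lip: "locally_lipschitz Dh1"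
    and h2_convex: "convex_on UNIV h2"
begin

definition ratio :: "'a \<Rightarrow> real" where
  "ratio y = f y / g y"

definition objective :: "'a \<Rightarrow> real" where
  "objective y = (f y)^2 / g y + h1 y - h2 y"

definition direction :: "'a \<Rightarrow> 'a \<Rightarrow> 'a" where
  "direction x z = Dh1 x - (ratio x)^2 *\<^sub>R Dg x - z"

lemma Fobj_eq: "y \<in> Omega g \<inter> C \<Longrightarrow> Fobj f g h1 h2 C y = ereal (objective y)"
  by (simp add: Fobj_def objective_def)

lemma domF_eq: "domF f g h1 h2 C = Omega g \<inter> C"
  by (auto simp: domF_def Fobj_def)

lemma ratio_nonneg: "0 \<le> ratio y"
  using f_nonneg g_nonneg by (simp add: ratio_def)

lemma continuous_data: "isCont f y" "isCont g y" "isCont h1 y" "isCont h2 y" "isCont Dg y" "isCont Dh1 y"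
  using convex_on_continuous[OF open_UNIV f_convex] convex_on_continuous[OF open_UNIV h2_convex]
    has_derivative_continuous[OF g_grad] has_derivative_continuous[OF h1_grad]
    locally_lipschitz_isCont[OF g_lip] locally_lipschitz_isCont[OF h1_lip]
  by (simp_all add: continuous_on_eq_continuous_at)

lemma tendsto_ratio: "X \<longlonglongrightarrow> y \<Longrightarrow> g y \<noteq> 0 \<Longrightarrow> (\<lambda>n. ratio (X n)) \<longlonglongrightarrow> ratio y"
  unfolding ratio_def by (intro tendsto_divide isCont_tendsto_compose[OF continuous_data(1)]
      isCont_tendsto_compose[OF continuous_data(2)])

lemma tendsto_direction:
  "X \<longlonglongrightarrow> y \<Longrightarrow> Z \<longlonglongrightarrow> w \<Longrightarrow> g y \<noteq> 0 \<Longrightarrow> (\<lambda>n. direction (X n) (Z n)) \<longlonglongrightarrow> direction y w"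
  unfolding direction_def
  by (intro tendsto_diff tendsto_scaleR tendsto_power tendsto_ratio
      isCont_tendsto_compose[OF continuous_data(5)] isCont_tendsto_compose[OF continuous_data(6)])

text \<open>At a subgradient \<open>z\<close> of \<open>h\<^sub>2\<close> at \<open>x\<close> the Fenchel-Young inequality is an equality,
  \<open>h\<^sub>2\<^sup>\<star>(z) = \<langle>x, z\<rangle> - h\<^sub>2(x)\<close>, and \<open>2 c f - c\<^sup>2 g = f\<^sup>2 / g\<close> at \<open>c = f / g\<close>.\<close>

lemma accept_test_iff:
  assumes x: "x \<in> Omega g \<inter> C" and z: "z \<in> subdiff (\<lambda>y. ereal (h2 y)) x"
  shows "(p \<in> Omega g \<and> Hfun f g h1 h2 C p z (f p / g p) + ereal (sig / 2 * norm (p - x)^2)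
            \<le> Fobj f g h1 h2 C x)
     \<longleftrightarrow> p \<in> Omega g \<inter> C \<and>
         (f p)^2 / g p + h1 p + inner (x - p) z - h2 x + sig / 2 * norm (p - x)^2 \<le> objective x"
proof (cases "p \<in> Omega g \<inter> C")
  case True
  then have "2 * (f p / g p) * f p - (f p / g p)^2 * g p = (f p)^2 / g p"
    by (simp add: Omega_def field_simps power2_eq_square)
  then show ?thesis
    using True Fobj_eq[OF x] conj_eq_at_subgradient[OF z]
    by (simp add: Hfun_def ind_def inner_commute algebra_simps)
qed (use Fobj_eq[OF x] in \<open>auto simp: Hfun_def ind_def\<close>)

lemma accepted_descent:
  assumes "z \<in> subdiff (\<lambda>y. ereal (h2 y)) x"
    and "(f p)^2 / g p + h1 p + inner (x - p) z - h2 x + sig / 2 * norm (p - x)^2 \<le> objective x"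
  shows "objective p + sig / 2 * norm (p - x)^2 \<le> objective x"
proof -
  have "h2 x + inner z (p - x) \<le> h2 p" using assms(1) by (simp add: subdiff_real_iff)
  then show ?thesis using assms(2) by (simp add: objective_def inner_diff_left inner_diff_right inner_commute)
qed

definition data_bounded_on :: "real \<Rightarrow> 'a set \<Rightarrow> bool" where
  "data_bounded_on B S \<longleftrightarrow>
     B-lipschitz_on S f \<and> B-lipschitz_on S Dg \<and> B-lipschitz_on S Dh1 \<and>
     (\<forall>y\<in>S. 1 \<le> B * g y \<and> f y \<le> B \<and> g y \<le> B \<and> \<bar>h1 y\<bar> \<le> B \<and> \<bar>h2 y\<bar> \<le> B \<and>
        norm (Dg y) \<le> B \<and> norm (Dh1 y) \<le> B)"

lemma data_bounded_on_mono:
  assumes "data_bounded_on B S" "B \<le> B'" "S' \<subseteq> S"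
  shows "data_bounded_on B' S'"
proof -
  have "B * g y \<le> B' * g y" for y using assms(2) g_nonneg by (simp add: mult_right_mono)
  then show ?thesis
    using assms unfolding data_bounded_on_def
    by (smt (verit, best) lipschitz_on_mono subsetD)
qed

lemma data_pointwise_bounded_near:
  assumes "g x > 0"
  obtains d M where "d > 0" and "\<And>y. y \<in> ball x d \<Longrightarrow> 1 \<le> M * g y \<and> f y \<le> M \<and> g y \<le> M \<and>
    \<bar>h1 y\<bar> \<le> M \<and> \<bar>h2 y\<bar> \<le> M \<and> norm (Dg y) \<le> M \<and> norm (Dh1 y) \<le> M"
proof -
  have "\<forall>\<^sub>F y in nhds x. dist (f y) (f x) < 1 \<and> dist (g y) (g x) < g x / 2 \<and> dist (h1 y) (h1 x) < 1
      \<and> dist (h2 y) (h2 x) < 1 \<and> dist (Dg y) (Dg x) < 1 \<and> dist (Dh1 y) (Dh1 x) < 1"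
    using assms by (intro eventually_conj isCont_eventually_dist_less continuous_data) auto
  then obtain d where "d > 0" and near: "\<And>y. dist y x < d \<Longrightarrow> dist (f y) (f x) < 1 \<and>
      dist (g y) (g x) < g x / 2 \<and> dist (h1 y) (h1 x) < 1 \<and> dist (h2 y) (h2 x) < 1 \<and>
      dist (Dg y) (Dg x) < 1 \<and> dist (Dh1 y) (Dh1 x) < 1"
    unfolding eventually_nhds_metric by blast
  define M where "M = 2 / g x + f x + 2 * g x + \<bar>h1 x\<bar> + \<bar>h2 x\<bar> + norm (Dg x) + norm (Dh1 x) + 1"
  have "0 \<le> f x" "0 < 2 / g x" using f_nonneg assms by auto
  then have M: "2 / g x \<le> M" "f x + 1 \<le> M" "2 * g x \<le> M" "\<bar>h1 x\<bar> + 1 \<le> M" "\<bar>h2 x\<bar> + 1 \<le> M"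
    "norm (Dg x) + 1 \<le> M" "norm (Dh1 x) + 1 \<le> M"
    using assms unfolding M_def by (smt (verit) abs_ge_zero norm_ge_zero)+
  have "1 \<le> M * g y \<and> f y \<le> M \<and> g y \<le> M \<and> \<bar>h1 y\<bar> \<le> M \<and> \<bar>h2 y\<bar> \<le> M \<and>
      norm (Dg y) \<le> M \<and> norm (Dh1 y) \<le> M" if "y \<in> ball x d" for y
  proof (intro conjI)
    have "dist y x < d" using that by (simp add: dist_commute)
    note near = near[OF this]
    then have gy: "g x / 2 \<le> g y" "g y \<le> 2 * g x" unfolding dist_real_def abs_less_iff by linarith+
    then have "1 \<le> 2 / g x * g y" using assms by (simp add: field_simps)
    also have "\<dots> \<le> M * g y" using M g_nonneg by (intro mult_right_mono) auto
    finally show "1 \<le> M * g y" .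
    show "f y \<le> M" "g y \<le> M" "\<bar>h1 y\<bar> \<le> M" "\<bar>h2 y\<bar> \<le> M"
      using near gy M by (auto simp: dist_real_def abs_less_iff)
    show "norm (Dg y) \<le> M" "norm (Dh1 y) \<le> M"
      using near M norm_triangle_ineq2[of "Dg y" "Dg x"] norm_triangle_ineq2[of "Dh1 y" "Dh1 x"]
      by (auto simp: dist_norm)
  qed
  with \<open>d > 0\<close> show ?thesis using that by blast
qed

lemma data_bounded_near:
  assumes "g x > 0"
  shows "\<exists>e>0. \<exists>B. data_bounded_on B (ball x e)"
proof -
  obtain e1 L1 where "e1 > 0" and L1: "L1-lipschitz_on (ball x e1) f"
    using convex_on_locally_lipschitz[OF f_convex] by blast
  obtain e2 L2 where "e2 > 0" and L2: "L2-lipschitz_on (ball x e2) Dg"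
    using locally_lipschitz_on_ball[OF g_lip] by blast
  obtain e3 L3 where "e3 > 0" and L3: "L3-lipschitz_on (ball x e3) Dh1"
    using locally_lipschitz_on_ball[OF h1_lip] by blast
  obtain d M where "d > 0" and M: "\<And>y. y \<in> ball x d \<Longrightarrow> 1 \<le> M * g y \<and> f y \<le> M \<and> g y \<le> M \<and>
      \<bar>h1 y\<bar> \<le> M \<and> \<bar>h2 y\<bar> \<le> M \<and> norm (Dg y) \<le> M \<and> norm (Dh1 y) \<le> M"
    using data_pointwise_bounded_near[OF assms] by blast
  define e where "e = min d (min e1 (min e2 e3))"
  define B where "B = L1 + L2 + L3 + M"
  have "0 \<le> M" using M[of x] \<open>d > 0\<close> assms by (smt (verit) centre_in_ball mult_nonpos_nonneg)
  moreover have "0 \<le> L1" "0 \<le> L2" "0 \<le> L3" using L1 L2 L3 by (auto dest: lipschitz_on_nonneg)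
  ultimately have B: "L1 \<le> B" "L2 \<le> B" "L3 \<le> B" "M \<le> B" by (auto simp: B_def)
  have "data_bounded_on B (ball x e)"
    unfolding data_bounded_on_def
  proof (intro conjI ballI)
    have "ball x e \<subseteq> ball x e1" "ball x e \<subseteq> ball x e2" "ball x e \<subseteq> ball x e3"
      by (auto simp: e_def)
    then show "B-lipschitz_on (ball x e) f" "B-lipschitz_on (ball x e) Dg" "B-lipschitz_on (ball x e) Dh1"
      using lipschitz_on_mono[OF L1] lipschitz_on_mono[OF L2] lipschitz_on_mono[OF L3] B by auto
    fix y assume "y \<in> ball x e"
    then have My: "1 \<le> M * g y \<and> f y \<le> M \<and> g y \<le> M \<and> \<bar>h1 y\<bar> \<le> M \<and> \<bar>h2 y\<bar> \<le> M \<and>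
        norm (Dg y) \<le> M \<and> norm (Dh1 y) \<le> M"
      by (intro M) (simp add: e_def)
    have "M * g y \<le> B * g y" using B g_nonneg by (simp add: mult_right_mono)
    with My B show "1 \<le> B * g y" "f y \<le> B" "g y \<le> B" "\<bar>h1 y\<bar> \<le> B" "\<bar>h2 y\<bar> \<le> B"
      "norm (Dg y) \<le> B" "norm (Dh1 y) \<le> B" by linarith+
  qed
  moreover have "e > 0" using \<open>d > 0\<close> \<open>e1 > 0\<close> \<open>e2 > 0\<close> \<open>e3 > 0\<close> by (simp add: e_def)
  ultimately show ?thesis by blast
qed

lemma data_bounded_onD:
  assumes "data_bounded_on B S" "y \<in> S"
  shows "0 < g y" "0 < B" "1 / g y \<le> B" "ratio y \<le> B^2" "f y \<le> B" "g y \<le> B"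
    "\<bar>h1 y\<bar> \<le> B" "\<bar>h2 y\<bar> \<le> B" "norm (Dg y) \<le> B" "norm (Dh1 y) \<le> B"
proof -
  have B: "1 \<le> B * g y" "f y \<le> B" "g y \<le> B" "\<bar>h1 y\<bar> \<le> B" "\<bar>h2 y\<bar> \<le> B"
    "norm (Dg y) \<le> B" "norm (Dh1 y) \<le> B"
    using assms unfolding data_bounded_on_def by auto
  then show "f y \<le> B" "g y \<le> B" "\<bar>h1 y\<bar> \<le> B" "\<bar>h2 y\<bar> \<le> B" "norm (Dg y) \<le> B" "norm (Dh1 y) \<le> B"
    by auto
  show "0 < g y" using B g_nonneg[of y] by (cases "g y = 0") auto
  with B show "0 < B" by (smt (verit) mult_nonpos_nonneg)
  from B \<open>0 < g y\<close> show inv: "1 / g y \<le> B" by (simp add: field_simps)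
  have "ratio y = f y * (1 / g y)" by (simp add: ratio_def)
  also have "\<dots> \<le> B * B" using B inv f_nonneg[of y] \<open>0 < g y\<close> by (intro mult_mono) auto
  finally show "ratio y \<le> B^2" by (simp add: power2_eq_square)
qed

lemma ratio_sq_change_le:
  assumes bd: "data_bounded_on B S" and "convex S" "x \<in> S" "p \<in> S"
  shows "g p * (ratio p - ratio x)^2 \<le> 4 * B^7 * norm (p - x)^2"
proof -
  note bx = data_bounded_onD[OF bd \<open>x \<in> S\<close>] and bp = data_bounded_onD[OF bd \<open>p \<in> S\<close>]
  define d where "d = norm (p - x)"
  have "B-lipschitz_on S g"
    using bd \<open>convex S\<close> g_grad bx(2)
    by (intro gradient_bounded_imp_lipschitz_on) (auto simp: data_bounded_on_def)
  then have dg: "\<bar>g x - g p\<bar> \<le> B * d"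
    using lipschitz_on_normD \<open>x \<in> S\<close> \<open>p \<in> S\<close> by (fastforce simp: d_def norm_minus_commute)
  have df: "\<bar>f p - f x\<bar> \<le> B * d"
    using bd lipschitz_on_normD \<open>x \<in> S\<close> \<open>p \<in> S\<close> by (fastforce simp: d_def data_bounded_on_def)
  define N where "N = (f p - f x) * g x + f x * (g x - g p)"
  have "\<bar>(f p - f x) * g x\<bar> \<le> (B * d) * B"
    unfolding abs_mult using df bx g_nonneg[of x] by (intro mult_mono) auto
  moreover have "\<bar>f x * (g x - g p)\<bar> \<le> B * (B * d)"
    unfolding abs_mult using dg bx f_nonneg[of x] by (intro mult_mono) (auto simp: abs_minus_commute)
  ultimately have "\<bar>N\<bar> \<le> B * d * B + B * (B * d)"
    unfolding N_def by (intro order_trans[OF abs_triangle_ineq add_mono])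
  also have "\<dots> = 2 * B^2 * d" by (simp add: power2_eq_square algebra_simps)
  finally have "\<bar>N\<bar>^2 \<le> (2 * B^2 * d)^2" by (intro power_mono) auto
  then have N: "N^2 \<le> (2 * B^2 * d)^2" by simp
  have "ratio p - ratio x = N / (g p * g x)"
    using bx bp by (simp add: ratio_def N_def field_simps)
  then have "g p * (ratio p - ratio x)^2 = N^2 * (1 / g p) * (1 / g x)^2"
    using bp by (simp add: power_divide power_mult_distrib power2_eq_square)
  also have "\<dots> \<le> (2 * B^2 * d)^2 * B * B^2"
  proof (rule mult_mono)
    show "N^2 * (1 / g p) \<le> (2 * B^2 * d)^2 * B" by (rule mult_mono[OF N bp(3)]) (use bp in auto)
    show "(1 / g x)^2 \<le> B^2" by (rule power_mono[OF bx(3)]) (use bx in simp)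
  qed (use bp in auto)
  also have "\<dots> = 4 * B^7 * d^2" by (simp add: power2_eq_square power_mult_distrib eval_nat_numeral)
  finally show ?thesis by (simp add: d_def)
qed

lemma direction_norm_le:
  assumes bd: "data_bounded_on B (ball x e)" and "0 < e" and z: "z \<in> subdiff (\<lambda>y. ereal (h2 y)) x"
  shows "norm (direction x z) \<le> B + B^5 + 4 * B / e"
proof -
  have x: "x \<in> ball x e" using \<open>0 < e\<close> by simp
  note bx = data_bounded_onD[OF bd x]
  have "norm z \<le> 4 * B / e"
    using z \<open>0 < e\<close> data_bounded_onD(8)[OF bd] by (intro subgradient_norm_le) (auto simp: subdiff_real_iff)
  moreover have "(ratio x)^2 \<le> (B^2)^2" using bx ratio_nonneg by (intro power_mono) auto
  then have "norm ((ratio x)^2 *\<^sub>R Dg x) \<le> (B^2)^2 * B"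
    using bx by (auto intro!: mult_mono)
  moreover have "norm (direction x z) \<le> norm (Dh1 x) + norm ((ratio x)^2 *\<^sub>R Dg x) + norm z"
    unfolding direction_def by (intro order_trans[OF norm_triangle_ineq4 add_right_mono] norm_triangle_ineq4)
  ultimately show ?thesis using bx by (simp add: power2_eq_square eval_nat_numeral)
qed

lemma prox_step_short:
  assumes bd: "data_bounded_on B (ball x e)" and "0 < e" and "norm v \<le> V" and "0 < a"
    and a1: "a \<le> e^2 / (64 * B^3)" and a2: "a \<le> e / (16 * V)"
    and basic: "2 * a * ratio x * f p + a * inner (p - x) v + norm (p - x)^2 / 2 \<le> 2 * a * ratio x * f x"
  shows "norm (p - x) < e / 2"
proof -
  note bx = data_bounded_onD[OF bd, of x]
  have "0 < B" using bx \<open>0 < e\<close> by simp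
  have "0 < V"
  proof (rule ccontr)
    assume "\<not> 0 < V"
    then have "e / (16 * V) \<le> 0" using \<open>0 < e\<close> by (simp add: divide_nonneg_nonpos)
    with a2 \<open>0 < a\<close> show False by simp
  qed
  define d where "d = norm (p - x)"
  have "- inner (p - x) v \<le> V * d"
    using Cauchy_Schwarz_ineq2[of "p - x" v] \<open>norm v \<le> V\<close> mult_left_mono[of "norm v" V d]
    by (simp add: d_def mult.commute)
  then have "- (a * inner (p - x) v) \<le> a * V * d"
    using mult_left_mono[of _ _ a] \<open>0 < a\<close> by fastforce
  moreover have "ratio x * f x \<le> B^2 * B"
    using bx \<open>0 < e\<close> ratio_nonneg f_nonneg by (intro mult_mono) auto
  then have "2 * a * ratio x * f x \<le> 2 * a * B^3"
    using \<open>0 < a\<close> by (simp add: power3_eq_cube power2_eq_square)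
  moreover have "0 \<le> 2 * a * ratio x * f p" using ratio_nonneg f_nonneg \<open>0 < a\<close> by simp
  ultimately have "d^2 \<le> 4 * a * B^3 + 2 * a * V * d"
    using basic unfolding d_def[symmetric] by linarith
  moreover have "4 * a * B^3 \<le> e^2 / 16" using a1 \<open>0 < B\<close> by (simp add: field_simps)
  moreover have "2 * a * V \<le> e / 8" using a2 \<open>0 < V\<close> by (simp add: field_simps)
  ultimately show ?thesis
    unfolding d_def by (intro quadratic_ineq_imp_less_half[OF norm_ge_zero _ _ _ \<open>0 < e\<close>])
qed

lemma prox_gradient_descent:
  assumes bd: "data_bounded_on B S" and "convex S" "x \<in> S" "p \<in> S" "0 < a"
    and basic: "2 * a * ratio x * f p + a * inner (p - x) (direction x z) + norm (p - x)^2 / 2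
                 \<le> 2 * a * ratio x * f x"
  shows "2 * ratio x * f p - (ratio x)^2 * g p + h1 p - inner p z + (1 / (2 * a) - B - B^5) * norm (p - x)^2
         \<le> 2 * ratio x * f x - (ratio x)^2 * g x + h1 x - inner x z"
proof -
  define c where "c = ratio x"
  define d where "d = norm (p - x)"
  note bx = data_bounded_onD[OF bd \<open>x \<in> S\<close>]
  have lip: "B-lipschitz_on S Dg" "B-lipschitz_on S Dh1" using bd by (auto simp: data_bounded_on_def)
  have h1: "h1 p \<le> h1 x + inner (Dh1 x) (p - x) + B * d^2"
    using lipschitz_gradient_linearization[OF h1_grad \<open>convex S\<close> lip(2) \<open>x \<in> S\<close> \<open>p \<in> S\<close>]
    by (simp add: d_def)
  have "g x + inner (Dg x) (p - x) - B * d^2 \<le> g p"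
    using lipschitz_gradient_linearization[OF g_grad \<open>convex S\<close> lip(1) \<open>x \<in> S\<close> \<open>p \<in> S\<close>]
    by (simp add: d_def)
  then have "c^2 * (g x + inner (Dg x) (p - x) - B * d^2) \<le> c^2 * g p"
    by (rule mult_left_mono) simp
  then have g: "c^2 * g x + c^2 * inner (Dg x) (p - x) - c^2 * (B * d^2) \<le> c^2 * g p"
    by (simp add: algebra_simps)
  have "c^2 * B \<le> (B^2)^2 * B"
    using bx ratio_nonneg by (intro mult_right_mono power_mono) (auto simp: c_def)
  then have "c^2 * B * d^2 \<le> (B^2)^2 * B * d^2" by (rule mult_right_mono) simp
  then have cB: "c^2 * (B * d^2) \<le> B^5 * d^2" by (simp add: eval_nat_numeral mult.assoc)
  have "2 * c * f p + inner (p - x) (direction x z) + d^2 / (2 * a) \<le> 2 * c * f x"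
    using basic \<open>0 < a\<close> by (simp add: c_def d_def field_simps)
  then show ?thesis
    using h1 g cB unfolding c_def[symmetric] d_def[symmetric] direction_def
    by (simp add: inner_commute algebra_simps)
qed

text \<open>The first two bounds keep the proximal step inside \<open>ball x (e / 2)\<close> (\<open>prox_step_short\<close>), the
  third lets the proximal term absorb the curvature terms in \<open>small_step_accepted\<close>.\<close>

definition step_bound :: "real \<Rightarrow> real \<Rightarrow> real \<Rightarrow> real" where
  "step_bound B e sig = min (e^2 / (64 * B^3))
     (min (e / (16 * (B + B^5 + 4 * B / e))) (1 / (2 * (B + B^5 + 4 * B^7 + sig / 2))))"

lemma step_bound_pos: "0 < B \<Longrightarrow> 0 < e \<Longrightarrow> 0 \<le> sig \<Longrightarrow> 0 < step_bound B e sig"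
  unfolding step_bound_def by (simp add: add_pos_nonneg)

lemma curvature_le_inverse_step:
  assumes "0 < a" and "a \<le> step_bound B e sig"
  shows "B + B^5 + 4 * B^7 + sig / 2 \<le> 1 / (2 * a)"
proof -
  define W where "W = B + B^5 + 4 * B^7 + sig / 2"
  have aW: "a \<le> 1 / (2 * W)" using assms(2) by (simp add: step_bound_def W_def)
  have "0 < W"
  proof (rule ccontr)
    assume "\<not> 0 < W"
    then have "1 / (2 * W) \<le> 0" by (simp add: divide_nonpos_nonneg)
    with aW \<open>0 < a\<close> show False by simp
  qed
  with aW \<open>0 < a\<close> show ?thesis by (simp add: W_def field_simps)
qed

lemma small_step_accepted:
  assumes bd: "data_bounded_on B (ball x e)" and "0 < e" and "x \<in> C"
    and z: "z \<in> subdiff (\<lambda>y. ereal (h2 y)) x" and "0 < a" and a: "a \<le> step_bound B e sig"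
    and p: "p \<in> prox (\<lambda>y. ereal (2 * a * ratio x * f y) + ind C y) (x - a *\<^sub>R direction x z)"
  shows "p \<in> Omega g \<inter> C \<and>
    (f p)^2 / g p + h1 p + inner (x - p) z - h2 x + sig / 2 * norm (p - x)^2 \<le> objective x"
proof -
  define c where "c = ratio x"
  define d where "d = norm (p - x)"
  have "p \<in> C" using prox_indicator_optimality(1)[OF p] \<open>x \<in> C\<close> by blast
  have basic: "2 * a * c * f p + a * inner (p - x) (direction x z) + d^2 / 2 \<le> 2 * a * c * f x"
    using prox_linearized_optimality[OF prox_indicator_optimality(2)[OF p _ \<open>x \<in> C\<close>]] \<open>x \<in> C\<close>
    by (auto simp: c_def d_def)
  have "d < e / 2"
    using prox_step_short[OF bd \<open>0 < e\<close> direction_norm_le[OF bd \<open>0 < e\<close> z] \<open>0 < a\<close>] a basic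
    by (simp add: step_bound_def c_def d_def)
  then have "p \<in> ball x e" using \<open>0 < e\<close> by (simp add: d_def dist_norm norm_minus_commute)
  have "x \<in> ball x e" using \<open>0 < e\<close> by simp
  note bp = data_bounded_onD[OF bd \<open>p \<in> ball x e\<close>] and bx = data_bounded_onD[OF bd \<open>x \<in> ball x e\<close>]
  have descent: "2 * c * f p - c^2 * g p + h1 p - inner p z + (1 / (2 * a) - B - B^5) * d^2
      \<le> 2 * c * f x - c^2 * g x + h1 x - inner x z"
    using prox_gradient_descent[OF bd convex_ball \<open>x \<in> ball x e\<close> \<open>p \<in> ball x e\<close> \<open>0 < a\<close>] basic
    by (simp add: c_def d_def)
  have change: "g p * (ratio p - c)^2 \<le> 4 * B^7 * d^2"
    using ratio_sq_change_le[OF bd convex_ball \<open>x \<in> ball x e\<close> \<open>p \<in> ball x e\<close>] by (simp add: c_def d_def)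
  \<comment> \<open>\<open>c \<mapsto> 2 c f(p) - c\<^sup>2 g(p)\<close> is a concave parabola with apex \<open>f(p)\<^sup>2 / g(p)\<close> at \<open>c = ratio p\<close>\<close>
  have apex: "(f p)^2 / g p = 2 * c * f p - c^2 * g p + g p * (ratio p - c)^2"
    using bp by (simp add: ratio_def field_simps power2_eq_square)
  have obj: "objective x = 2 * c * f x - c^2 * g x + h1 x - h2 x"
    using bx by (simp add: objective_def c_def ratio_def field_simps power2_eq_square)
  have "4 * B^7 + sig / 2 \<le> 1 / (2 * a) - B - B^5"
    using curvature_le_inverse_step[OF \<open>0 < a\<close> a] by simp
  then have "(4 * B^7 + sig / 2) * d^2 \<le> (1 / (2 * a) - B - B^5) * d^2" by (rule mult_right_mono) simp
  then have "(f p)^2 / g p + h1 p + inner (x - p) z - h2 x + sig / 2 * d^2 \<le> objective x"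
    using descent change apex obj by (simp add: algebra_simps)
  with \<open>p \<in> C\<close> bp show ?thesis by (simp add: Omega_def d_def)
qed

lemma critical_pointI:
  assumes xs: "xs \<in> Omega g \<inter> C" and w: "w \<in> subdiff (\<lambda>y. ereal (h2 y)) xs"
    and opt: "\<And>y. y \<in> C \<Longrightarrow>
      2 * ratio xs * f xs + inner (xs - y) (direction xs w) \<le> 2 * ratio xs * f y + Q * norm (y - xs)^2"
  shows "critical_point f g Dg Dh1 h2 C xs"
proof -
  define c where "c = ratio xs"
  have "convex_on C (\<lambda>y. 2 * c * f y)"
    using ratio_nonneg convex_on_subset[OF f_convex _ C_convex] by (intro convex_on_cmul) (auto simp: c_def)
  moreover have "inner (- direction xs w) (y - xs) = inner (xs - y) (direction xs w)" for y
    by (metis inner_commute inner_minus_left inner_minus_right minus_diff_eq)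
  ultimately have "2 * c * f xs + inner (- direction xs w) (y - xs) \<le> 2 * c * f y" if "y \<in> C" for y
    using xs opt that by (intro subgradient_of_quadratic_growth[OF C_convex, where Q = Q]) (auto simp: c_def)
  then have "- direction xs w \<in> subdiff (\<lambda>y. ereal (2 * c * f y) + ind C y) xs"
    using xs by (intro subdiff_plus_indI) auto
  moreover have "- direction xs w - c^2 *\<^sub>R Dg xs + Dh1 xs - w = 0"
    by (simp add: direction_def c_def)
  ultimately show ?thesis
    using xs w unfolding critical_point_def Let_def c_def ratio_def by blast
qed

end

section \<open>Convergence of Algorithm 1\<close>

locale alg1_run = fractional_problem f g h1 h2 Dg Dh1 C
  for f g h1 h2 :: "'a::euclidean_space \<Rightarrow> real" and Dg Dh1 :: "'a \<Rightarrow> 'a" and C :: "'a set" +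
  fixes alo sig r :: real and x z :: "nat \<Rightarrow> 'a" and a0 :: "nat \<Rightarrow> real" and j :: "nat \<Rightarrow> nat"
    and xh :: "nat \<Rightarrow> nat \<Rightarrow> 'a"
  assumes alo_pos: "0 < alo" and sig_pos: "0 < sig" and r_pos: "0 < r"
    and x0_dom: "x 0 \<in> domF f g h1 h2 C"
    and sublevel_compact: "compact {y \<in> domF f g h1 h2 C. Fobj f g h1 h2 C y \<le> Fobj f g h1 h2 C (x 0)}"
    and z_subgrad: "\<And>k. z k \<in> subdiff (\<lambda>y. ereal (h2 y)) (x k)"
    and a0_ge: "\<And>k. alo \<le> a0 k"
    and trial_prox: "\<And>k i. i \<le> j k \<Longrightarrow>
      xh k i \<in> prox (\<lambda>y. ereal (2 * (r ^ i * a0 k) * (f (x k) / g (x k)) * f y) + ind C y)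
        (x k - (r ^ i * a0 k) *\<^sub>R (Dh1 (x k) - (f (x k) / g (x k))^2 *\<^sub>R Dg (x k) - z k))"
    and trial_test: "\<And>k i. i \<le> j k \<Longrightarrow>
      (xh k i \<in> Omega g \<and> Hfun f g h1 h2 C (xh k i) (z k) (f (xh k i) / g (xh k i))
         + ereal (sig / 2 * norm (xh k i - x k)^2) \<le> Fobj f g h1 h2 C (x k)) \<longleftrightarrow> i = j k"
    and x_Suc: "\<And>k. x (Suc k) = xh k (j k)"
begin

definition sublevel :: "'a set" where
  "sublevel = {y \<in> Omega g \<inter> C. objective y \<le> objective (x 0)}"

lemma sublevel_eq: "{y \<in> domF f g h1 h2 C. Fobj f g h1 h2 C y \<le> Fobj f g h1 h2 C (x 0)} = sublevel"
  using x0_dom by (auto simp: sublevel_def domF_eq Fobj_eq)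

lemma compact_sublevel: "compact sublevel"
  using sublevel_compact sublevel_eq by simp

lemma trial_prox_step:
  "i \<le> j k \<Longrightarrow> xh k i \<in> prox (\<lambda>y. ereal (2 * (r ^ i * a0 k) * ratio (x k) * f y) + ind C y)
     (x k - (r ^ i * a0 k) *\<^sub>R direction (x k) (z k))"
  using trial_prox by (simp add: ratio_def direction_def)

lemma iterate_descent:
  assumes "x k \<in> Omega g \<inter> C"
  shows "x (Suc k) \<in> Omega g \<inter> C \<and> objective (x (Suc k)) + sig / 2 * norm (x (Suc k) - x k)^2 \<le> objective (x k)"
  using trial_test[of "j k" k] accept_test_iff[OF assms z_subgrad] accepted_descent[OF z_subgrad]
  by (simp add: x_Suc)

lemma iterates_in_sublevel: "x k \<in> sublevel"
proof (induction k)
  case 0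
  then show ?case using x0_dom by (simp add: sublevel_def domF_eq)
next
  case (Suc k)
  have "0 \<le> sig / 2 * norm (x (Suc k) - x k)^2" using sig_pos by simp
  with Suc show ?case using iterate_descent[of k] by (auto simp: sublevel_def)
qed

lemma uniform_data_bound:
  obtains e B where "0 < e" and "\<And>y. y \<in> sublevel \<Longrightarrow> data_bounded_on B (ball y e)"
proof -
  have "\<exists>e>0. \<exists>B. \<forall>y\<in>sublevel. data_bounded_on B (ball y e)"
  proof (rule compact_uniformly_local)
    show "compact sublevel" by (rule compact_sublevel)
    show "\<exists>e>0. \<exists>B. data_bounded_on B (ball y e)" if "y \<in> sublevel" for y
      using that g_nonneg[of y] by (intro data_bounded_near) (auto simp: sublevel_def Omega_def)
  qed (rule data_bounded_on_mono)
  then show ?thesis using that by blast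
qed

lemma accepted_step_ge:
  obtains amin where "0 < amin" and "\<And>k. amin \<le> r ^ j k * a0 k"
proof -
  obtain e B where "0 < e" and bd: "\<And>y. y \<in> sublevel \<Longrightarrow> data_bounded_on B (ball y e)"
    using uniform_data_bound by blast
  have "0 < B" using data_bounded_onD(2)[OF bd[OF iterates_in_sublevel[of 0]], of "x 0"] \<open>0 < e\<close> by simp
  define amin where "amin = min alo (r * step_bound B e sig)"
  have short_is_last: "i = j k" if "i \<le> j k" "r ^ i * a0 k \<le> step_bound B e sig" for i k
  proof -
    have xk: "x k \<in> Omega g \<inter> C" using iterates_in_sublevel[of k] by (simp add: sublevel_def)
    have "0 < r ^ i * a0 k" using r_pos alo_pos a0_ge[of k] by simp
    then show ?thesis
      using small_step_accepted[OF bd[OF iterates_in_sublevel] \<open>0 < e\<close> _ z_subgrad _ that(2)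
          trial_prox_step[OF that(1)]] xk accept_test_iff[OF xk z_subgrad] trial_test[OF that(1)]
      by blast
  qed
  have "amin \<le> r ^ j k * a0 k" for k
  proof (cases "j k")
    case 0
    then show ?thesis using a0_ge[of k] by (simp add: amin_def)
  next
    case (Suc i)
    then have "step_bound B e sig < r ^ i * a0 k" using short_is_last[of i k] by force
    then have "r * step_bound B e sig \<le> r ^ j k * a0 k"
      using r_pos Suc by (simp add: mult.assoc)
    then show ?thesis by (simp add: amin_def)
  qed
  moreover have "0 < amin"
    using alo_pos r_pos step_bound_pos[OF \<open>0 < B\<close> \<open>0 < e\<close>] sig_pos by (simp add: amin_def)
  ultimately show ?thesis using that by blast
qed

lemma steps_tendsto_zero: "(\<lambda>k. x (Suc k) - x k) \<longlonglongrightarrow> 0"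
proof -
  obtain e B where "0 < e" and bd: "\<And>y. y \<in> sublevel \<Longrightarrow> data_bounded_on B (ball y e)"
    using uniform_data_bound by blast
  have lower: "- 2 * B \<le> objective y" if "y \<in> sublevel" for y
  proof -
    have "\<bar>h1 y\<bar> \<le> B" "\<bar>h2 y\<bar> \<le> B" using data_bounded_onD(7,8)[OF bd[OF that], of y] \<open>0 < e\<close> by auto
    moreover have "0 \<le> (f y)^2 / g y" using g_nonneg[of y] by simp
    ultimately show ?thesis unfolding objective_def abs_le_iff by linarith
  qed
  have telescope: "sig / 2 * (\<Sum>k<n. norm (x (Suc k) - x k)^2) \<le> objective (x 0) - objective (x n)" for n
  proof (induction n)
    case (Suc n)
    then show ?case
      using iterate_descent[of n] iterates_in_sublevel[of n] by (simp add: sublevel_def algebra_simps)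
  qed simp
  have "summable (\<lambda>k. norm (x (Suc k) - x k)^2)"
  proof (rule summableI_nonneg_bounded)
    fix n
    show "(\<Sum>k<n. norm (x (Suc k) - x k)^2) \<le> (objective (x 0) + 2 * B) / (sig / 2)"
      using telescope[of n] lower[OF iterates_in_sublevel[of n]] sig_pos by (simp add: field_simps)
  qed simp
  then have "(\<lambda>k. norm (x (Suc k) - x k)^2) \<longlonglongrightarrow> 0" by (rule summable_LIMSEQ_zero)
  from tendsto_real_sqrt[OF this] have "(\<lambda>k. norm (x (Suc k) - x k)) \<longlonglongrightarrow> 0" by simp
  then show ?thesis by (simp add: tendsto_norm_zero_iff)
qed

lemma subgradients_bounded: "bounded (range z)"
proof -
  obtain e B where "0 < e" and bd: "\<And>y. y \<in> sublevel \<Longrightarrow> data_bounded_on B (ball y e)"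
    using uniform_data_bound by blast
  have "norm (z k) \<le> 4 * B / e" for k
    using z_subgrad[of k] \<open>0 < e\<close> data_bounded_onD(8)[OF bd[OF iterates_in_sublevel]]
    by (intro subgradient_norm_le) (auto simp: subdiff_real_iff)
  then show ?thesis by (auto intro: boundedI)
qed

lemma iterate_optimality:
  assumes "0 < amin" "amin \<le> r ^ j k * a0 k" "y \<in> C"
  shows "2 * ratio (x k) * f (x (Suc k)) + inner (x (Suc k) - y) (direction (x k) (z k))
    \<le> 2 * ratio (x k) * f y + norm (y - x k)^2 / (2 * amin)"
proof -
  define a where "a = r ^ j k * a0 k"
  define c where "c = ratio (x k)"
  have "0 < a" using assms unfolding a_def by linarith
  have "2 * a * c * f (x (Suc k)) + a * inner (x (Suc k) - y) (direction (x k) (z k))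
      + norm (x (Suc k) - x k)^2 / 2 \<le> 2 * a * c * f y + norm (y - x k)^2 / 2"
    unfolding a_def c_def
    using prox_linearized_optimality[where \<psi> = "\<lambda>y. 2 * (r ^ j k * a0 k) * ratio (x k) * f y",
        OF prox_indicator_optimality(2)[OF trial_prox_step[OF order_refl] _ assms(3)]] assms(3)
    by (auto simp: x_Suc)
  then have "2 * a * c * f (x (Suc k)) + a * inner (x (Suc k) - y) (direction (x k) (z k))
      \<le> 2 * a * c * f y + norm (y - x k)^2 / 2"
    using zero_le_power2[of "norm (x (Suc k) - x k)"] by linarith
  then have "2 * c * f (x (Suc k)) + inner (x (Suc k) - y) (direction (x k) (z k))
      \<le> 2 * c * f y + norm (y - x k)^2 / (2 * a)"
    using \<open>0 < a\<close> by (simp add: field_simps)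
  also have "norm (y - x k)^2 / (2 * a) \<le> norm (y - x k)^2 / (2 * amin)"
    using assms by (intro frac_le) (auto simp: a_def)
  finally show ?thesis by (simp add: c_def)
qed

lemma accumulation_subsequence:
  assumes "strict_mono s" and "(x \<circ> s) \<longlonglongrightarrow> xs"
  obtains t w where "(\<lambda>n. x (t n)) \<longlonglongrightarrow> xs" "(\<lambda>n. x (Suc (t n))) \<longlonglongrightarrow> xs" "(\<lambda>n. z (t n)) \<longlonglongrightarrow> w"
proof -
  have "bounded (range (z \<circ> s))" using subgradients_bounded by (rule bounded_subset) auto
  then obtain q w where "strict_mono q" and zw: "(z \<circ> s \<circ> q) \<longlonglongrightarrow> w"
    using bounded_imp_convergent_subsequence by blast
  define t where "t = s \<circ> q"
  have xt: "(\<lambda>n. x (t n)) \<longlonglongrightarrow> xs"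
    using LIMSEQ_subseq_LIMSEQ[OF assms(2) \<open>strict_mono q\<close>] by (simp add: t_def comp_def)
  have "strict_mono t" using assms(1) \<open>strict_mono q\<close> by (simp add: t_def strict_mono_o)
  then have "(\<lambda>n. x (Suc (t n)) - x (t n)) \<longlonglongrightarrow> 0"
    using LIMSEQ_subseq_LIMSEQ[OF steps_tendsto_zero] by (simp add: comp_def)
  from tendsto_add[OF this xt] have "(\<lambda>n. x (Suc (t n))) \<longlonglongrightarrow> xs" by simp
  moreover have "(\<lambda>n. z (t n)) \<longlonglongrightarrow> w" using zw by (simp add: t_def comp_def)
  ultimately show ?thesis using that xt by blast
qed

lemma limit_optimality:
  assumes xt: "(\<lambda>n. x (t n)) \<longlonglongrightarrow> xs" and xt1: "(\<lambda>n. x (Suc (t n))) \<longlonglongrightarrow> xs"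
    and zt: "(\<lambda>n. z (t n)) \<longlonglongrightarrow> w" and "g xs \<noteq> 0"
    and "0 < amin" and amin: "\<And>k. amin \<le> r ^ j k * a0 k" and "y \<in> C"
  shows "2 * ratio xs * f xs + inner (xs - y) (direction xs w)
    \<le> 2 * ratio xs * f y + 1 / (2 * amin) * norm (y - xs)^2"
proof -
  have "(\<lambda>n. 2 * ratio (x (t n)) * f (x (Suc (t n))) + inner (x (Suc (t n)) - y) (direction (x (t n)) (z (t n))))
      \<longlonglongrightarrow> 2 * ratio xs * f xs + inner (xs - y) (direction xs w)"
    by (intro tendsto_add[OF tendsto_mult[OF tendsto_mult[OF tendsto_const tendsto_ratio[OF xt \<open>g xs \<noteq> 0\<close>]]
          isCont_tendsto_compose[OF continuous_data(1) xt1]]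
          tendsto_inner[OF tendsto_diff[OF xt1 tendsto_const] tendsto_direction[OF xt zt \<open>g xs \<noteq> 0\<close>]]])
  moreover have "(\<lambda>n. 2 * ratio (x (t n)) * f y + norm (y - x (t n))^2 / (2 * amin))
      \<longlonglongrightarrow> 2 * ratio xs * f y + norm (y - xs)^2 / (2 * amin)"
    using \<open>0 < amin\<close>
    by (intro tendsto_add[OF tendsto_mult[OF tendsto_mult[OF tendsto_const tendsto_ratio[OF xt \<open>g xs \<noteq> 0\<close>]]
          tendsto_const] tendsto_divide[OF tendsto_power[OF tendsto_norm[OF tendsto_diff[OF tendsto_const xt]]]
          tendsto_const]]) simp
  ultimately have "2 * ratio xs * f xs + inner (xs - y) (direction xs w)
      \<le> 2 * ratio xs * f y + norm (y - xs)^2 / (2 * amin)"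
    using iterate_optimality[OF \<open>0 < amin\<close> amin \<open>y \<in> C\<close>] by (intro LIMSEQ_le) auto
  then show ?thesis by simp
qed

lemma accumulation_point_critical:
  assumes "strict_mono s" and "(x \<circ> s) \<longlonglongrightarrow> xs"
  shows "xs \<in> sublevel \<and> critical_point f g Dg Dh1 h2 C xs"
proof -
  have "xs \<in> sublevel"
    using compact_imp_closed[OF compact_sublevel] _ assms(2)
    by (rule closed_sequentially) (simp add: iterates_in_sublevel)
  then have xs: "xs \<in> Omega g \<inter> C" "g xs \<noteq> 0" by (auto simp: sublevel_def Omega_def)
  obtain t w where xt: "(\<lambda>n. x (t n)) \<longlonglongrightarrow> xs" "(\<lambda>n. x (Suc (t n))) \<longlonglongrightarrow> xs"
    and zt: "(\<lambda>n. z (t n)) \<longlonglongrightarrow> w"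
    using accumulation_subsequence[OF assms] by blast
  have w: "w \<in> subdiff (\<lambda>y. ereal (h2 y)) xs"
    using convex_on_continuous[OF open_UNIV h2_convex] xt(1) zt z_subgrad by (rule subgradient_limit)
  obtain amin where "0 < amin" and amin: "\<And>k. amin \<le> r ^ j k * a0 k"
    using accepted_step_ge by blast
  show ?thesis
    using \<open>xs \<in> sublevel\<close> critical_pointI[OF xs(1) w limit_optimality[OF xt zt xs(2) \<open>0 < amin\<close> amin]]
    by blast
qed

end

theorem theorem4p2:
  fixes f g h1 h2 :: "'a::euclidean_space \<Rightarrow> real"
    and Dg Dh1 :: "'a \<Rightarrow> 'a"
    and C :: "'a set"
    and alo ahi sig r :: real
    and x :: "nat \<Rightarrow> 'a"
  assumes f_nonneg: "\<And>y. f y \<ge> 0"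
    and g_nonneg: "\<And>y. g y \<ge> 0"
    and C_closed: "closed C" and C_convex: "convex C"
    and C_Omega: "C \<inter> Omega g \<noteq> {}"
    and f_convex: "convex_on UNIV f"
    and g_grad: "\<And>y. (g has_derivative (\<lambda>v. inner (Dg y) v)) (at y)"
    and g_lip: "locally_lipschitz Dg"
    and h1_grad: "\<And>y. (h1 has_derivative (\<lambda>v. inner (Dh1 y) v)) (at y)"
    and h1_lip: "locally_lipschitz Dh1"
    and h2_convex: "convex_on UNIV h2"
    and params: "0 < alo" "alo < ahi" "sig > 0" "0 < r" "r < 1"
    and gen: "generated_by_alg1 f g Dg h1 Dh1 h2 C alo ahi sig r x"
    and X0_compact: "compact {y \<in> domF f g h1 h2 C. Fobj f g h1 h2 C y \<le> Fobj f g h1 h2 C (x 0)}"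
  shows "\<forall>xs. (\<exists>s. strict_mono s \<and> (x \<circ> s) \<longlonglongrightarrow> xs) \<longrightarrow>
           xs \<in> {y \<in> domF f g h1 h2 C. Fobj f g h1 h2 C y \<le> Fobj f g h1 h2 C (x 0)} \<and>
           critical_point f g Dg Dh1 h2 C xs"
proof -
  from gen obtain z a0 j xh where "alg1_run f g h1 h2 Dg Dh1 C alo sig r x z a0 j xh"
    unfolding generated_by_alg1_def alg1_run_def alg1_run_axioms_def fractional_problem_def Let_def
    using assms by blast
  then interpret alg1_run f g h1 h2 Dg Dh1 C alo sig r x z a0 j xh .
  show ?thesis
  proof (intro allI impI)
    fix xs assume "\<exists>s. strict_mono s \<and> (x \<circ> s) \<longlonglongrightarrow> xs"
    then obtain s where "strict_mono s" "(x \<circ> s) \<longlonglongrightarrow> xs" by blast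
    from accumulation_point_critical[OF this]
    show "xs \<in> {y \<in> domF f g h1 h2 C. Fobj f g h1 h2 C y \<le> Fobj f g h1 h2 C (x 0)} \<and>
        critical_point f g Dg Dh1 h2 C xs"
      unfolding sublevel_eq .
  qed
qed

end
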